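(* Let $X$ be a Polish space with compatible metric $d$, and let $(\mathcal M_n)_{n\in\mathbb{N}}$ be partitions of $X$, each consisting of at most countably many Borel sets, with $\lim_{n\to\infty}\|\mathcal M_n\|=0$. Let $\mu_n,\mu\in\mathcal P(X)$ satisfy $\mu_n(M)=\mu(M)$ for all $n$ and all $M\in\mathcal M_n$. Then $\mu_n\to\mu$ weakly. If moreover $p\in[1,\infty)$ and $\mu_n,\mu$ have finite $p$-th moments, then $\mu_n\to\mu$ in $\mathcal W_p$.
   Context: The mesh of a partition is $\|\mathcal M\|=\sup_{M\in\mathcal M}\mathrm{diam}(M)$. $\mathcal W_p^p(\alpha,\beta)=\inf_{\gamma\in\mathrm{Cpl}(\alpha,\beta)}\int d^p\,d\gamma$. *)

theory Defs
  imports "HOL-Probability.Probability"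
begin

definition Polish_space :: "'a topology \<Rightarrow> bool" where
  "Polish_space T \<longleftrightarrow> completely_metrizable_space T \<and> separable_space T"

definition ediam :: "'a::metric_space set \<Rightarrow> ereal" where
  "ediam S = (SUP z\<in>S \<times> S. ereal (dist (fst z) (snd z)))"

definition mesh :: "'a::metric_space set set \<Rightarrow> ereal" where
  "mesh P = (SUP S\<in>P. ediam S)"

definition countable_borel_partition :: "'a::topological_space set set \<Rightarrow> bool" where
  "countable_borel_partition P \<longleftrightarrow> countable P \<and> P \<subseteq> sets borel \<and>
     disjoint P \<and> \<Union>P = UNIV"

definition borel_prob :: "'a::topological_space measure \<Rightarrow> bool" where
  "borel_prob M \<longleftrightarrow> prob_space M \<and> sets M = sets borel"

definition weak_conv_seq :: "(nat \<Rightarrow> 'a::topological_space measure) \<Rightarrow> 'a measure \<Rightarrow> bool" where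
  "weak_conv_seq \<mu>s \<mu> \<longleftrightarrow>
     (\<forall>f :: 'a \<Rightarrow> real. continuous_on UNIV f \<and> bounded (range f) \<longrightarrow>
        (\<lambda>n. integral\<^sup>L (\<mu>s n) f) \<longlonglongrightarrow> integral\<^sup>L \<mu> f)"

definition finite_moment :: "real \<Rightarrow> 'a::metric_space measure \<Rightarrow> bool" where
  "finite_moment p M \<longleftrightarrow> (\<exists>x0. (\<integral>\<^sup>+ x. ennreal (dist x x0 powr p) \<partial>M) < \<infinity>)"

definition couplings :: "'a::topological_space measure \<Rightarrow> 'a measure \<Rightarrow> ('a \<times> 'a) measure set" where
  "couplings \<alpha> \<beta> = {\<gamma>. prob_space \<gamma> \<and> sets \<gamma> = sets (borel \<Otimes>\<^sub>M borel) \<and>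
      distr \<gamma> borel fst = \<alpha> \<and> distr \<gamma> borel snd = \<beta>}"

definition Wpp :: "real \<Rightarrow> 'a::metric_space measure \<Rightarrow> 'a measure \<Rightarrow> ennreal" where
  "Wpp p \<alpha> \<beta> = (INF \<gamma>\<in>couplings \<alpha> \<beta>. \<integral>\<^sup>+ z. ennreal (dist (fst z) (snd z) powr p) \<partial>\<gamma>)"

text \<open>The p-Wasserstein distance W_p = (W_p^p)^(1/p), for measures where W_p^p is finite.\<close>
definition Wasserstein :: "real \<Rightarrow> 'a::metric_space measure \<Rightarrow> 'a measure \<Rightarrow> real" where
  "Wasserstein p \<alpha> \<beta> = enn2real (Wpp p \<alpha> \<beta>) powr (1 / p)"

end

theory Submission
  imports Defs
begin

text \<open>If \<open>\<mu>\<^sub>n\<close> and \<open>\<mu>\<close> give the same mass to every cell of \<open>\<M>\<^sub>n\<close>, they can be coupled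
  cell by cell: on each cell \<open>M\<close> take the normalised product of the two restrictions. Under this
  coupling both coordinates lie in the same cell almost surely, so their distance is at most
  \<open>\<parallel>\<M>\<^sub>n\<parallel>\<close>; hence \<open>W\<^sub>p(\<mu>\<^sub>n, \<mu>) \<le> \<parallel>\<M>\<^sub>n\<parallel> \<rightarrow> 0\<close>, without using Polishness or finite moments.
  For a bounded continuous \<open>f\<close> the same coupling gives
  \<open>|\<integral>f d\<mu>\<^sub>n - \<integral>f d\<mu>| \<le> \<integral>osc(f, cell\<^sub>n y) d\<mu>(y)\<close>, and the oscillation of \<open>f\<close> over the shrinking
  cell of \<open>y\<close> tends to \<open>0\<close> by continuity, so dominated convergence gives weak convergence.\<close>

definition cell :: "'a set set \<Rightarrow> 'a \<Rightarrow> 'a set" where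
  "cell P x = (THE M. M \<in> P \<and> x \<in> M)"

lemma ex1_cell:
  assumes "disjoint P" "\<Union>P = UNIV"
  shows "\<exists>!M. M \<in> P \<and> x \<in> M"
proof -
  obtain M where "M \<in> P" "x \<in> M" using assms(2) by blast
  with assms(1) show ?thesis unfolding disjoint_def by blast
qed

lemma
  assumes "disjoint P" "\<Union>P = UNIV"
  shows cell_in_partition: "cell P x \<in> P" and in_cell: "x \<in> cell P x"
  using theI'[OF ex1_cell[OF assms]] unfolding cell_def by simp_all

lemma cell_eqI:
  assumes "disjoint P" "\<Union>P = UNIV" "M \<in> P" "x \<in> M"
  shows "cell P x = M"
  using ex1_cell[OF assms(1,2)] cell_in_partition[OF assms(1,2)] in_cell[OF assms(1,2)] assms(3,4)
  by blast

lemma countable_borel_partitionD: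
  assumes "countable_borel_partition P"
  shows "disjoint P" "\<Union>P = UNIV" "countable P" "\<And>M. M \<in> P \<Longrightarrow> M \<in> sets borel"
  using assms by (auto simp: countable_borel_partition_def)

lemma measurable_comp_cell:
  assumes P: "countable_borel_partition P" and h: "\<And>M. M \<in> P \<Longrightarrow> h M \<in> space N"
  shows "(\<lambda>x. h (cell P x)) \<in> measurable borel N"
proof (rule measurableI)
  note partition = countable_borel_partitionD(1,2)[OF P]
  show "h (cell P x) \<in> space N" for x using h cell_in_partition[OF partition] by blast
  fix A
  have "(\<lambda>x. h (cell P x)) -` A \<inter> space borel = \<Union>{M\<in>P. h M \<in> A}"
  proof (intro equalityI subsetI)
    fix x assume "x \<in> \<Union>{M\<in>P. h M \<in> A}"
    then show "x \<in> (\<lambda>x. h (cell P x)) -` A \<inter> space borel"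
      using cell_eqI[OF partition] by auto
  qed (use cell_in_partition[OF partition] in_cell[OF partition] in blast)
  also have "\<dots> \<in> sets borel"
    using countable_borel_partitionD[OF P]
    by (intro sets.countable_Union) (auto intro: countable_subset)
  finally show "(\<lambda>x. h (cell P x)) -` A \<inter> space borel \<in> sets borel" .
qed

text \<open>On \<open>\<beta>\<close>-null cells the real division by zero yields the
  density \<open>0\<close>, which is harmless because these cells are \<open>\<alpha>\<close>-null as well.\<close>
definition cell_coupling :: "'a set set \<Rightarrow> 'a measure \<Rightarrow> 'a measure \<Rightarrow> ('a \<times> 'a) measure" where
  "cell_coupling P \<alpha> \<beta> = density (\<alpha> \<Otimes>\<^sub>M \<beta>)
     (\<lambda>(x, y). ennreal (1 / measure \<beta> (cell P x)) * indicator (cell P x) y)"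

locale partition_agreement =
  fixes P :: "'a::topological_space set set" and \<alpha> \<beta> :: "'a measure"
  assumes partition: "countable_borel_partition P"
    and borel_prob_\<alpha>: "borel_prob \<alpha>" and borel_prob_\<beta>: "borel_prob \<beta>"
    and measure_agree: "\<And>M. M \<in> P \<Longrightarrow> measure \<alpha> M = measure \<beta> M"
begin

sublocale pair_prob_space \<alpha> \<beta>
  using borel_prob_\<alpha> borel_prob_\<beta>
  by (simp add: borel_prob_def pair_prob_space_def pair_sigma_finite_def prob_space_imp_sigma_finite)

lemma sets_\<alpha>: "sets \<alpha> = sets borel" and sets_\<beta>: "sets \<beta> = sets borel"
  using borel_prob_\<alpha> borel_prob_\<beta> by (simp_all add: borel_prob_def)

lemma space_\<alpha>: "space \<alpha> = UNIV" and space_\<beta>: "space \<beta> = UNIV"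
  using sets_eq_imp_space_eq[OF sets_\<alpha>] sets_eq_imp_space_eq[OF sets_\<beta>] by simp_all

lemma cell_in_P: "cell P x \<in> P" and in_cell_P: "x \<in> cell P x"
  and cell_P_eqI: "M \<in> P \<Longrightarrow> x \<in> M \<Longrightarrow> cell P x = M"
  using cell_in_partition[OF countable_borel_partitionD(1,2)[OF partition]]
    in_cell[OF countable_borel_partitionD(1,2)[OF partition]]
    cell_eqI[OF countable_borel_partitionD(1,2)[OF partition]] .

lemma in_cell_iff_cell_eq: "y \<in> cell P x \<longleftrightarrow> cell P x = cell P y"
  using cell_P_eqI[OF cell_in_P] in_cell_P by metis

lemma cell_sets: "cell P x \<in> sets borel"
  using countable_borel_partitionD(4)[OF partition cell_in_P] .

lemma cell_sets_\<alpha>: "cell P x \<in> sets \<alpha>" and cell_sets_\<beta>: "cell P x \<in> sets \<beta>"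
  using cell_sets sets_\<alpha> sets_\<beta> by simp_all

lemma same_cell_sets: "{z. snd z \<in> cell P (fst z)} \<in> sets (\<alpha> \<Otimes>\<^sub>M \<beta>)"
proof -
  have "{z. snd z \<in> cell P (fst z)} = (\<Union>M\<in>P. M \<times> M)"
  proof (intro equalityI subsetI)
    fix z assume "z \<in> {z. snd z \<in> cell P (fst z)}"
    then have "z \<in> cell P (fst z) \<times> cell P (fst z)"
      using in_cell_P by (simp add: mem_Times_iff)
    then show "z \<in> (\<Union>M\<in>P. M \<times> M)" using cell_in_P by blast
  next
    fix z assume "z \<in> (\<Union>M\<in>P. M \<times> M)"
    then obtain M where "M \<in> P" "fst z \<in> M" "snd z \<in> M" by (auto simp: mem_Times_iff)
    then show "z \<in> {z. snd z \<in> cell P (fst z)}"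
      using cell_P_eqI by simp
  qed
  also have "\<dots> \<in> sets (\<alpha> \<Otimes>\<^sub>M \<beta>)"
    using countable_borel_partitionD[OF partition] sets_\<alpha> sets_\<beta>
    by (intro sets.countable_UN'') (auto intro!: pair_measureI)
  finally show ?thesis .
qed

lemma emeasure_agree: "M \<in> P \<Longrightarrow> emeasure \<alpha> M = emeasure \<beta> M"
  using measure_agree by (simp add: M1.emeasure_eq_measure M2.emeasure_eq_measure)

lemma AE_measure_cell_nonzero:
  shows "AE x in \<alpha>. measure \<beta> (cell P x) \<noteq> 0" and "AE x in \<beta>. measure \<beta> (cell P x) \<noteq> 0"
proof -
  let ?N = "\<Union>M\<in>{M\<in>P. measure \<beta> M = 0}. M"
  have sub: "{x. measure \<beta> (cell P x) = 0} \<subseteq> ?N"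
    using cell_in_P in_cell_P by blast
  have count: "countable {M\<in>P. measure \<beta> M = 0}"
    using countable_borel_partitionD(3)[OF partition] by (rule countable_subset[rotated]) blast
  have "?N \<in> null_sets \<alpha>"
    using count countable_borel_partitionD(4)[OF partition] sets_\<alpha> measure_agree
    by (intro null_sets_UN') (auto simp: M1.emeasure_eq_measure)
  then show "AE x in \<alpha>. measure \<beta> (cell P x) \<noteq> 0"
    using sub by (intro AE_I') auto
  have "?N \<in> null_sets \<beta>"
    using count countable_borel_partitionD(4)[OF partition] sets_\<beta>
    by (intro null_sets_UN') (auto simp: M2.emeasure_eq_measure)
  then show "AE x in \<beta>. measure \<beta> (cell P x) \<noteq> 0"
    using sub by (intro AE_I') auto
qed

lemma inverse_measure_cell_cancel:
  assumes "measure \<beta> (cell P x) \<noteq> 0"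
  shows "ennreal (1 / measure \<beta> (cell P x)) * emeasure \<beta> (cell P x) = 1"
  using assms by (simp add: M2.emeasure_eq_measure ennreal_mult''[symmetric])

lemma cell_coupling_density_measurable:
  "(\<lambda>(x, y). ennreal (1 / measure \<beta> (cell P x)) * indicator (cell P x) y)
     \<in> borel_measurable (\<alpha> \<Otimes>\<^sub>M \<beta>)"
proof -
  have "(\<lambda>x. 1 / measure \<beta> (cell P x)) \<in> borel_measurable \<alpha>"
    using measurable_comp_cell[OF partition, of "\<lambda>M. 1 / measure \<beta> M" borel]
    by (simp add: measurable_cong_sets[OF sets_\<alpha> refl])
  then have "(\<lambda>z. ennreal (1 / measure \<beta> (cell P (fst z))) * indicator {z. snd z \<in> cell P (fst z)} z)
      \<in> borel_measurable (\<alpha> \<Otimes>\<^sub>M \<beta>)"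
    using same_cell_sets by measurable
  then show ?thesis
    by (rule measurable_cong[THEN iffD1, rotated]) (auto simp: indicator_def)
qed

lemma emeasure_cell_coupling_fst:
  assumes A: "A \<in> sets borel"
  shows "emeasure (cell_coupling P \<alpha> \<beta>) (A \<times> UNIV) = emeasure \<alpha> A"
proof -
  have AU: "A \<times> UNIV \<in> sets (\<alpha> \<Otimes>\<^sub>M \<beta>)"
    using A sets_\<alpha> space_\<beta> by (metis pair_measureI sets.top)
  have "emeasure (cell_coupling P \<alpha> \<beta>) (A \<times> UNIV)
      = (\<integral>\<^sup>+ x. \<integral>\<^sup>+ y. (ennreal (1 / measure \<beta> (cell P x)) * indicator A x) * indicator (cell P x) y \<partial>\<beta> \<partial>\<alpha>)"
    unfolding cell_coupling_def
    using AU cell_coupling_density_measurable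
    by (subst emeasure_density, simp_all, subst M2.nn_integral_fst[symmetric])
       (auto intro!: nn_integral_cong simp: indicator_def)
  also have "\<dots> = (\<integral>\<^sup>+ x. indicator A x * (ennreal (1 / measure \<beta> (cell P x)) * emeasure \<beta> (cell P x)) \<partial>\<alpha>)"
    by (intro nn_integral_cong, subst nn_integral_cmult_indicator[OF cell_sets_\<beta>]) (simp add: mult_ac)
  also have "\<dots> = (\<integral>\<^sup>+ x. indicator A x \<partial>\<alpha>)"
    using AE_measure_cell_nonzero(1)
    by (intro nn_integral_cong_AE) (auto simp: inverse_measure_cell_cancel)
  also have "\<dots> = emeasure \<alpha> A"
    using A sets_\<alpha> by simp
  finally show ?thesis .
qed

lemma emeasure_cell_coupling_snd:
  assumes A: "A \<in> sets borel"
  shows "emeasure (cell_coupling P \<alpha> \<beta>) (UNIV \<times> A) = emeasure \<beta> A"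
proof -
  have UA: "UNIV \<times> A \<in> sets (\<alpha> \<Otimes>\<^sub>M \<beta>)"
    using A sets_\<beta> space_\<alpha> by (metis pair_measureI sets.top)
  have "emeasure (cell_coupling P \<alpha> \<beta>) (UNIV \<times> A)
      = (\<integral>\<^sup>+ y. \<integral>\<^sup>+ x. (ennreal (1 / measure \<beta> (cell P y)) * indicator A y) * indicator (cell P y) x \<partial>\<alpha> \<partial>\<beta>)"
    unfolding cell_coupling_def
    using UA cell_coupling_density_measurable
    by (subst emeasure_density, simp_all, subst nn_integral_snd[symmetric])
       (auto intro!: nn_integral_cong simp: indicator_def in_cell_iff_cell_eq)
  also have "\<dots> = (\<integral>\<^sup>+ y. indicator A y * (ennreal (1 / measure \<beta> (cell P y)) * emeasure \<beta> (cell P y)) \<partial>\<beta>)"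
    by (intro nn_integral_cong, subst nn_integral_cmult_indicator[OF cell_sets_\<alpha>])
       (simp add: emeasure_agree[OF cell_in_P] mult_ac)
  also have "\<dots> = (\<integral>\<^sup>+ y. indicator A y \<partial>\<beta>)"
    using AE_measure_cell_nonzero(2)
    by (intro nn_integral_cong_AE) (auto simp: inverse_measure_cell_cancel)
  also have "\<dots> = emeasure \<beta> A"
    using A sets_\<beta> by simp
  finally show ?thesis .
qed

lemma cell_coupling_in_couplings: "cell_coupling P \<alpha> \<beta> \<in> couplings \<alpha> \<beta>"
proof -
  let ?\<gamma> = "cell_coupling P \<alpha> \<beta>"
  have sets_\<gamma>: "sets ?\<gamma> = sets (borel \<Otimes>\<^sub>M borel)"
    unfolding cell_coupling_def using sets_\<alpha> sets_\<beta> by (simp cong: sets_pair_measure_cong)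
  have space_\<gamma>: "space ?\<gamma> = UNIV"
    unfolding cell_coupling_def by (simp add: space_pair_measure space_\<alpha> space_\<beta>)
  have fst_measurable: "fst \<in> measurable ?\<gamma> borel" and snd_measurable: "snd \<in> measurable ?\<gamma> borel"
    by (simp_all add: measurable_cong_sets[OF sets_\<gamma> refl])
  have "distr ?\<gamma> borel fst = \<alpha>"
  proof (rule measure_eqI)
    fix A assume "A \<in> sets (distr ?\<gamma> borel fst)"
    moreover have "fst -` A \<inter> space ?\<gamma> = A \<times> UNIV" by (auto simp: space_\<gamma>)
    ultimately show "emeasure (distr ?\<gamma> borel fst) A = emeasure \<alpha> A"
      by (simp add: emeasure_distr[OF fst_measurable] emeasure_cell_coupling_fst)
  qed (simp add: sets_\<alpha>)
  moreover have "distr ?\<gamma> borel snd = \<beta>"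
  proof (rule measure_eqI)
    fix A assume "A \<in> sets (distr ?\<gamma> borel snd)"
    moreover have "snd -` A \<inter> space ?\<gamma> = UNIV \<times> A" by (auto simp: space_\<gamma>)
    ultimately show "emeasure (distr ?\<gamma> borel snd) A = emeasure \<beta> A"
      by (simp add: emeasure_distr[OF snd_measurable] emeasure_cell_coupling_snd)
  qed (simp add: sets_\<beta>)
  moreover have "prob_space ?\<gamma>"
    using emeasure_cell_coupling_fst[of UNIV] M1.emeasure_space_1
    by (intro prob_spaceI) (simp add: space_\<gamma> space_\<alpha>)
  ultimately show ?thesis using sets_\<gamma> by (simp add: couplings_def)
qed

lemma AE_cell_coupling_same_cell: "AE z in cell_coupling P \<alpha> \<beta>. snd z \<in> cell P (fst z)"
  unfolding cell_coupling_def using cell_coupling_density_measurable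
  by (subst AE_density) (auto intro!: AE_I2 split: split_indicator_asm)

end

lemma dist_le_mesh:
  assumes "M \<in> P" "a \<in> M" "b \<in> M"
  shows "ereal (dist a b) \<le> mesh P"
proof -
  have "ereal (dist a b) \<le> ediam M"
    unfolding ediam_def using assms by (intro SUP_upper2[where i="(a, b)"]) auto
  also have "\<dots> \<le> mesh P"
    unfolding mesh_def using assms(1) by (rule SUP_upper)
  finally show ?thesis .
qed

lemma mesh_nonneg: "\<Union>P = UNIV \<Longrightarrow> 0 \<le> mesh P"
  using dist_le_mesh[of _ P x x for x] by (metis UNIV_I Union_iff dist_self zero_ereal_def)

lemma AE_cell_coupling_dist_le_mesh:
  fixes P :: "'a::metric_space set set"
  assumes "partition_agreement P \<alpha> \<beta>"
  shows "AE z in cell_coupling P \<alpha> \<beta>. ereal (dist (fst z) (snd z)) \<le> mesh P"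
proof -
  interpret partition_agreement P \<alpha> \<beta> by fact
  show ?thesis
    using AE_cell_coupling_same_cell
    by (rule eventually_mono) (use dist_le_mesh[OF cell_in_P in_cell_P] in blast)
qed

lemma Wasserstein_nonneg: "0 \<le> Wasserstein p \<alpha> \<beta>"
  by (simp add: Wasserstein_def)

lemma Wasserstein_le_mesh:
  fixes P :: "'a::metric_space set set"
  assumes agreement: "partition_agreement P \<alpha> \<beta>" and p: "0 < p" and mesh: "mesh P \<le> ereal r"
  shows "Wasserstein p \<alpha> \<beta> \<le> r"
proof -
  interpret partition_agreement P \<alpha> \<beta> by fact
  let ?\<gamma> = "cell_coupling P \<alpha> \<beta>"
  interpret \<gamma>: prob_space ?\<gamma>
    using cell_coupling_in_couplings by (simp add: couplings_def)
  have r: "0 \<le> r"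
    using order_trans[OF mesh_nonneg[OF countable_borel_partitionD(2)[OF partition]] mesh] by simp
  have "Wpp p \<alpha> \<beta> \<le> (\<integral>\<^sup>+ z. ennreal (dist (fst z) (snd z) powr p) \<partial>?\<gamma>)"
    unfolding Wpp_def using cell_coupling_in_couplings by (rule INF_lower)
  also have "\<dots> \<le> (\<integral>\<^sup>+ z. ennreal (r powr p) \<partial>?\<gamma>)"
  proof (rule nn_integral_mono_AE)
    show "AE z in ?\<gamma>. ennreal (dist (fst z) (snd z) powr p) \<le> ennreal (r powr p)"
      using AE_cell_coupling_dist_le_mesh[OF agreement]
    proof eventually_elim
      case (elim z)
      have "dist (fst z) (snd z) \<le> r" using order_trans[OF elim mesh] by simp
      then show ?case using p by (intro ennreal_leI powr_mono2) auto
    qed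
  qed
  also have "\<dots> = ennreal (r powr p)"
    by (simp add: \<gamma>.emeasure_space_1)
  finally have "enn2real (Wpp p \<alpha> \<beta>) \<le> r powr p"
    by (simp add: enn2real_leI)
  then have "Wasserstein p \<alpha> \<beta> \<le> (r powr p) powr (1 / p)"
    unfolding Wasserstein_def using p by (intro powr_mono2) auto
  also have "\<dots> = r"
    using p r by (simp add: powr_powr)
  finally show ?thesis .
qed

lemma abs_integral_diff_le_coupling:
  fixes f h :: "'a::topological_space \<Rightarrow> real"
  assumes coupling: "\<gamma> \<in> couplings \<alpha> \<beta>"
    and le: "AE z in \<gamma>. \<bar>f (fst z) - f (snd z)\<bar> \<le> h (snd z)"
    and f: "f \<in> borel_measurable borel" "\<And>x. \<bar>f x\<bar> \<le> B"
    and h: "h \<in> borel_measurable borel" "\<And>x. \<bar>h x\<bar> \<le> C"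
  shows "\<bar>integral\<^sup>L \<alpha> f - integral\<^sup>L \<beta> f\<bar> \<le> integral\<^sup>L \<beta> h"
proof -
  have sets_\<gamma>: "sets \<gamma> = sets (borel \<Otimes>\<^sub>M borel)"
    and \<alpha>: "\<alpha> = distr \<gamma> borel fst" and \<beta>: "\<beta> = distr \<gamma> borel snd"
    using coupling by (auto simp: couplings_def)
  interpret \<gamma>: prob_space \<gamma>
    using coupling by (simp add: couplings_def)
  have [measurable]: "fst \<in> measurable \<gamma> borel" "snd \<in> measurable \<gamma> borel"
    by (simp_all add: measurable_cong_sets[OF sets_\<gamma> refl])
  have [measurable]: "f \<in> borel_measurable borel" "h \<in> borel_measurable borel"
    using f h by simp_all
  have integrable: "integrable \<gamma> (\<lambda>z. f (fst z))" "integrable \<gamma> (\<lambda>z. f (snd z))"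
    "integrable \<gamma> (\<lambda>z. h (snd z))"
    using f(2) h(2)
    by (auto intro: \<gamma>.integrable_const_bound[where B=B] \<gamma>.integrable_const_bound[where B=C])
  have "\<bar>integral\<^sup>L \<alpha> f - integral\<^sup>L \<beta> f\<bar> = \<bar>\<integral>z. f (fst z) - f (snd z) \<partial>\<gamma>\<bar>"
    unfolding \<alpha> \<beta> using integrable by (simp add: integral_distr)
  also have "\<dots> \<le> (\<integral>z. \<bar>f (fst z) - f (snd z)\<bar> \<partial>\<gamma>)"
    by (rule integral_abs_bound)
  also have "\<dots> \<le> (\<integral>z. h (snd z) \<partial>\<gamma>)"
    using le integrable by (intro integral_mono_AE) auto
  also have "\<dots> = integral\<^sup>L \<beta> h"
    unfolding \<beta> by (simp add: integral_distr)
  finally show ?thesis .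
qed

definition osc :: "('a \<Rightarrow> real) \<Rightarrow> 'a set \<Rightarrow> real" where
  "osc f S = (SUP (a, b)\<in>S \<times> S. \<bar>f a - f b\<bar>)"

lemma abs_diff_le_osc:
  assumes "bounded (range f)" "a \<in> S" "b \<in> S"
  shows "\<bar>f a - f b\<bar> \<le> osc f S"
proof -
  obtain B where B: "\<And>x. \<bar>f x\<bar> \<le> B" using assms(1) by (auto simp: bounded_real)
  have "\<bar>f a - f b\<bar> \<le> 2 * B" for a b
    using B[of a] B[of b] by linarith
  then have "bdd_above ((\<lambda>(a, b). \<bar>f a - f b\<bar>) ` (S \<times> S))"
    by (intro bdd_aboveI2[where M="2 * B"]) auto
  then show ?thesis
    unfolding osc_def using assms(2,3) by (intro cSUP_upper2[where x="(a, b)"]) auto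
qed

lemma osc_le:
  assumes "S \<noteq> {}" "\<And>a b. a \<in> S \<Longrightarrow> b \<in> S \<Longrightarrow> \<bar>f a - f b\<bar> \<le> c"
  shows "osc f S \<le> c"
  unfolding osc_def using assms by (intro cSUP_least) auto

lemma abs_osc_le:
  assumes B: "\<And>x. \<bar>f x\<bar> \<le> B" and "a \<in> S"
  shows "\<bar>osc f S\<bar> \<le> 2 * B"
proof -
  have "bounded (range f)"
    using B by (auto simp: bounded_real)
  then have "0 \<le> osc f S"
    using abs_diff_le_osc[OF _ \<open>a \<in> S\<close> \<open>a \<in> S\<close>] by fastforce
  moreover have "\<bar>f a - f b\<bar> \<le> 2 * B" for a b
    using B[of a] B[of b] by linarith
  then have "osc f S \<le> 2 * B"
    using \<open>a \<in> S\<close> by (intro osc_le) auto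
  ultimately show ?thesis by simp
qed

lemma osc_cell_tendsto_zero:
  fixes f :: "'a::metric_space \<Rightarrow> real"
  assumes partition: "\<And>n. disjoint (M n)" "\<And>n. \<Union>(M n) = UNIV"
    and mesh: "(\<lambda>n. mesh (M n)) \<longlonglongrightarrow> 0"
    and f: "bounded (range f)" "isCont f y"
  shows "(\<lambda>n. osc f (cell (M n) y)) \<longlonglongrightarrow> 0"
  unfolding tendsto_iff
proof (intro allI impI)
  fix r :: real assume "0 < r"
  then have "0 < r / 3" by simp
  then obtain d where "0 < d" and d: "\<And>x. dist x y < d \<Longrightarrow> \<bar>f x - f y\<bar> < r / 3"
    using f(2) unfolding continuous_at_eps_delta dist_real_def by meson
  have "eventually (\<lambda>n. mesh (M n) < ereal d) sequentially"
    using order_tendstoD(2)[OF mesh] \<open>0 < d\<close> by (simp add: zero_ereal_def)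
  then show "eventually (\<lambda>n. dist (osc f (cell (M n) y)) 0 < r) sequentially"
  proof eventually_elim
    case (elim n)
    have near: "\<bar>f a - f y\<bar> < r / 3" if "a \<in> cell (M n) y" for a
    proof (rule d)
      have "ereal (dist a y) \<le> mesh (M n)"
        by (rule dist_le_mesh[OF cell_in_partition[OF partition] that in_cell[OF partition]])
      also have "\<dots> < ereal d" by (fact elim)
      finally show "dist a y < d" by simp
    qed
    have "\<bar>f a - f b\<bar> \<le> 2 * r / 3" if "a \<in> cell (M n) y" "b \<in> cell (M n) y" for a b
      using near[OF that(1)] near[OF that(2)] by linarith
    then have "osc f (cell (M n) y) \<le> 2 * r / 3"
      using in_cell[OF partition(1)[of n] partition(2)[of n], of y] by (intro osc_le) auto
    moreover have "0 \<le> osc f (cell (M n) y)"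
      using abs_diff_le_osc[OF f(1) in_cell[OF partition] in_cell[OF partition], of y] by simp
    ultimately show ?case using \<open>0 < r\<close> by simp
  qed
qed

lemma integral_osc_cell_tendsto_zero:
  fixes f :: "'a::metric_space \<Rightarrow> real"
  assumes partition: "\<And>n. countable_borel_partition (M n)"
    and mesh: "(\<lambda>n. mesh (M n)) \<longlonglongrightarrow> 0"
    and \<mu>: "borel_prob \<mu>"
    and f: "continuous_on UNIV f" "bounded (range f)"
  shows "(\<lambda>n. \<integral>y. osc f (cell (M n) y) \<partial>\<mu>) \<longlonglongrightarrow> 0"
proof -
  interpret prob_space \<mu> using \<mu> by (simp add: borel_prob_def)
  have sets_\<mu>: "sets \<mu> = sets borel" using \<mu> by (simp add: borel_prob_def)
  obtain B where B: "\<And>x. \<bar>f x\<bar> \<le> B" using f(2) by (auto simp: bounded_real)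
  have "(\<lambda>n. \<integral>y. osc f (cell (M n) y) \<partial>\<mu>) \<longlonglongrightarrow> (\<integral>y. 0 \<partial>\<mu>)"
  proof (rule integral_dominated_convergence[where w="\<lambda>_. 2 * B"])
    show "(\<lambda>y. osc f (cell (M n) y)) \<in> borel_measurable \<mu>" for n
      using measurable_comp_cell[OF partition[of n], of "osc f" borel]
      by (simp add: measurable_cong_sets[OF sets_\<mu> refl])
    have "isCont f y" for y
      using f(1) by (simp add: continuous_on_eq_continuous_at)
    then show "AE y in \<mu>. (\<lambda>n. osc f (cell (M n) y)) \<longlonglongrightarrow> 0"
      by (intro AE_I2 osc_cell_tendsto_zero[OF countable_borel_partitionD(1,2)[OF partition] mesh f(2)])
    show "AE y in \<mu>. norm (osc f (cell (M n) y)) \<le> 2 * B" for n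
      using abs_osc_le[OF B in_cell[OF countable_borel_partitionD(1,2)[OF partition]]] by simp
  qed simp_all
  then show ?thesis by simp
qed

lemma abs_integral_diff_le_integral_osc:
  assumes agreement: "partition_agreement P \<alpha> \<beta>"
    and f: "f \<in> borel_measurable borel" "bounded (range f)"
  shows "\<bar>integral\<^sup>L \<alpha> f - integral\<^sup>L \<beta> f\<bar> \<le> (\<integral>y. osc f (cell P y) \<partial>\<beta>)"
proof -
  interpret partition_agreement P \<alpha> \<beta> by fact
  obtain B where B: "\<And>x. \<bar>f x\<bar> \<le> B" using f(2) by (auto simp: bounded_real)
  have "\<bar>osc f (cell P y)\<bar> \<le> 2 * B" for y
    using abs_osc_le[OF B in_cell_P] .
  moreover have "AE z in cell_coupling P \<alpha> \<beta>. \<bar>f (fst z) - f (snd z)\<bar> \<le> osc f (cell P (snd z))"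
    using AE_cell_coupling_same_cell
    by (rule eventually_mono) (metis abs_diff_le_osc[OF f(2)] in_cell_P in_cell_iff_cell_eq)
  ultimately show ?thesis
    using measurable_comp_cell[OF partition, of "osc f" borel] f
    by (intro abs_integral_diff_le_coupling[OF cell_coupling_in_couplings _ _ B]) auto
qed

theorem lemma2p4:
  fixes \<M> :: "nat \<Rightarrow> 'a::metric_space set set"
    and \<mu>s :: "nat \<Rightarrow> 'a measure" and \<mu> :: "'a measure"
  assumes polish: "Polish_space (euclidean :: 'a topology)"
    and part: "\<And>n. countable_borel_partition (\<M> n)"
    and mesh_lim: "(\<lambda>n. mesh (\<M> n)) \<longlonglongrightarrow> 0"
    and prob_n: "\<And>n. borel_prob (\<mu>s n)"
    and prob: "borel_prob \<mu>"
    and agree: "\<And>n M. M \<in> \<M> n \<Longrightarrow> measure (\<mu>s n) M = measure \<mu> M"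
  shows "weak_conv_seq \<mu>s \<mu> \<and>
    (\<forall>p::real. 1 \<le> p \<and> (\<forall>n. finite_moment p (\<mu>s n)) \<and> finite_moment p \<mu> \<longrightarrow>
       (\<lambda>n. Wasserstein p (\<mu>s n) \<mu>) \<longlonglongrightarrow> 0)"
proof -
  have agreement: "partition_agreement (\<M> n) (\<mu>s n) \<mu>" for n
    using part prob_n prob agree by (simp add: partition_agreement_def)
  have "weak_conv_seq \<mu>s \<mu>"
    unfolding weak_conv_seq_def
  proof (intro allI impI, elim conjE)
    fix f :: "'a \<Rightarrow> real"
    assume f: "continuous_on UNIV f" "bounded (range f)"
    have "\<bar>integral\<^sup>L (\<mu>s n) f - integral\<^sup>L \<mu> f\<bar> \<le> (\<integral>y. osc f (cell (\<M> n) y) \<partial>\<mu>)" for n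
      using agreement borel_measurable_continuous_onI[OF f(1)] f(2)
      by (rule abs_integral_diff_le_integral_osc)
    then have "(\<lambda>n. integral\<^sup>L (\<mu>s n) f - integral\<^sup>L \<mu> f) \<longlonglongrightarrow> 0"
      by (intro Lim_null_comparison[OF always_eventually
            integral_osc_cell_tendsto_zero[OF part mesh_lim prob f]]) simp
    then show "(\<lambda>n. integral\<^sup>L (\<mu>s n) f) \<longlonglongrightarrow> integral\<^sup>L \<mu> f"
      by (rule LIM_zero_cancel)
  qed
  moreover have "(\<lambda>n. Wasserstein p (\<mu>s n) \<mu>) \<longlonglongrightarrow> 0" if "1 \<le> p" for p
  proof (rule tendsto_sandwich[OF _ _ tendsto_const lim_real_of_ereal])
    have "eventually (\<lambda>n. mesh (\<M> n) < 1) sequentially"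
      using order_tendstoD(2)[OF mesh_lim] by simp
    then show "eventually (\<lambda>n. Wasserstein p (\<mu>s n) \<mu> \<le> real_of_ereal (mesh (\<M> n))) sequentially"
    proof eventually_elim
      case (elim n)
      have "0 \<le> mesh (\<M> n)"
        using mesh_nonneg[OF countable_borel_partitionD(2)[OF part]] .
      with elim have "mesh (\<M> n) = ereal (real_of_ereal (mesh (\<M> n)))"
        by (cases "mesh (\<M> n)") auto
      with \<open>1 \<le> p\<close> show ?case
        by (intro Wasserstein_le_mesh[OF agreement]) simp_all
    qed
    show "eventually (\<lambda>n. 0 \<le> Wasserstein p (\<mu>s n) \<mu>) sequentially"
      by (simp add: Wasserstein_nonneg)
    show "(\<lambda>n. mesh (\<M> n)) \<longlonglongrightarrow> ereal 0"
      using mesh_lim by (simp add: zero_ereal_def)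
  qed
  ultimately show ?thesis by blast
qed

end
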